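(* Let $t\ge 3$ and let $L$ be an $\mathbb{F}_q$-linear set of pseudoregulus type of $\Lambda=PG(1,q^t)$. Then its transversal points are uniquely determined: if $L=L_{\rho,\tau}$ with respect to transversal points $P_1,P_2$ and also $L=L_{\rho',\tau'}$ with respect to transversal points $P_1',P_2'$, then $\{P_1',P_2'\}=\{P_1,P_2\}$.
   Context: Let $\Lambda=PG(V,\mathbb{F}_{q^t})=PG(1,q^t)$ with $V$ a 2-dimensional $\mathbb{F}_{q^t}$-space; $\langle\mathbf u\rangle_{q^t}$ denotes the point defined by $\mathbf u\neq\mathbf 0$. Definition: given two distinct points $P_1=\langle\mathbf w\rangle_{q^t}$, $P_2=\langle\mathbf v\rangle_{q^t}$ of $\Lambda$, an automorphism $\tau$ of $\mathbb{F}_{q^t}$ with $\mathrm{Fix}(\tau)=\mathbb{F}_q$, and $\rho\in\mathbb{F}_{q^t}^*$, the set $L_{\rho,\tau}=\{\langle\lambda\mathbf w+\rho\lambda^\tau\mathbf v\rangle_{q^t}:\lambda\in\mathbb{F}_{q^t}^*\}$ is called an $\mathbb{F}_q$-linear set of pseudoregulus type of $\Lambda$, with transversal points $P_1$ and $P_2$. *)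

theory Defs
  imports Main
begin

text \<open>The 2-dimensional vector space V over the field 'a is modelled as 'a \<times> 'a.\<close>

definition vscale :: "'a::field \<Rightarrow> 'a \<times> 'a \<Rightarrow> 'a \<times> 'a" where
  "vscale c u = (c * fst u, c * snd u)"

definition vadd :: "'a::field \<times> 'a \<Rightarrow> 'a \<times> 'a \<Rightarrow> 'a \<times> 'a" where
  "vadd u v = (fst u + fst v, snd u + snd v)"

definition proj_pt :: "'a::field \<times> 'a \<Rightarrow> ('a \<times> 'a) set" where
  "proj_pt u = {vscale c u | c. True}"

definition field_aut :: "('a::field \<Rightarrow> 'a) \<Rightarrow> bool" where
  "field_aut \<tau> \<longleftrightarrow> bij \<tau> \<and> (\<forall>x y. \<tau> (x + y) = \<tau> x + \<tau> y) \<and> (\<forall>x y. \<tau> (x * y) = \<tau> x * \<tau> y)"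

definition Fix :: "('a \<Rightarrow> 'a) \<Rightarrow> 'a set" where
  "Fix \<tau> = {x. \<tau> x = x}"

text \<open>L_{rho,tau} with respect to transversal points <w> and <v>.\<close>
definition pseudoregulus_set ::
  "'a::field \<times> 'a \<Rightarrow> 'a \<times> 'a \<Rightarrow> 'a \<Rightarrow> ('a \<Rightarrow> 'a) \<Rightarrow> ('a \<times> 'a) set set" where
  "pseudoregulus_set w v \<rho> \<tau> =
     {proj_pt (vadd (vscale l w) (vscale (\<rho> * \<tau> l) v)) | l. l \<noteq> 0}"

end

theory Submission
  imports Defs "HOL-Computational_Algebra.Polynomial"
begin

(* The ratios tau(l)/l (l <> 0) form a multiplicative
   group H of order n = (q^t - 1)/(q - 1) = 1 + q + q^2 m with m >= 1.
   If L_{rho,tau} w.r.t. <w>,<v> equals L_{rho',tau'} w.r.t. <w'>,<v'>, write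
   w' = a w + b v and v' = c w + d v.  Every point of the second description lies in the
   first one, which yields (b + d z)^n = rho^n (a + c z)^n for all n values z in rho' H',
   i.e. for all roots of z^n - rho'^n.  Hence the polynomial (b + d X)^n - rho^n (a + c X)^n
   is a multiple of X^n - rho'^n, so its coefficients at X^q and X^(q+1) vanish.  Since
   x -> x^q is additive, (b + d X)^n = (b + d X)(b^q + d^q X^q)(b^(q^2) + d^(q^2) X^(q^2))^m,
   and comparing these two coefficients forces the matrix (a b; c d) to be diagonal or
   antidiagonal, i.e. {<w'>,<v'>} = {<w>,<v>}. *)

section \<open>Automorphisms and their fixed field\<close>

lemma aut_basic:
  fixes \<sigma> :: "'a::field \<Rightarrow> 'a"
  assumes "field_aut \<sigma>"
  shows "\<sigma> 0 = 0" and "\<sigma> 1 = 1"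
    and "\<sigma> (x + y) = \<sigma> x + \<sigma> y" and aut_mult: "\<sigma> (x * y) = \<sigma> x * \<sigma> y"
    and aut_eq0: "\<sigma> x = 0 \<longleftrightarrow> x = 0"
    and aut_div: "\<sigma> (x / y) = \<sigma> x / \<sigma> y"
proof -
  have inj: "inj \<sigma>" and add: "\<And>x y. \<sigma> (x + y) = \<sigma> x + \<sigma> y"
    and mult: "\<And>x y. \<sigma> (x * y) = \<sigma> x * \<sigma> y"
    using assms by (auto simp: field_aut_def bij_is_inj)
  have "\<sigma> 0 + \<sigma> 0 = \<sigma> 0 + 0" using add[of 0 0] by simp
  then show zero: "\<sigma> 0 = 0" by (metis add_left_cancel)
  show "\<sigma> (x + y) = \<sigma> x + \<sigma> y" "\<sigma> (x * y) = \<sigma> x * \<sigma> y" by (fact add mult)+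
  show eq0: "\<sigma> x = 0 \<longleftrightarrow> x = 0" for x using inj zero by (metis injD)
  have "\<sigma> 1 * \<sigma> 1 = \<sigma> 1 * 1" "\<sigma> 1 \<noteq> 0" using mult[of 1 1] eq0[of 1] by simp_all
  then show one: "\<sigma> 1 = 1" by (metis mult_left_cancel)
  have inv: "\<sigma> (inverse x) = inverse (\<sigma> x)" for x
  proof (cases "x = 0")
    case False
    then have "\<sigma> x * \<sigma> (inverse x) = 1" using mult[of x "inverse x"] one by simp
    then show ?thesis by (metis inverse_unique)
  qed (simp add: zero)
  show "\<sigma> (x / y) = \<sigma> x / \<sigma> y" by (simp add: divide_inverse mult inv)
qed

lemma fix_closed:
  fixes \<sigma> :: "'a::field \<Rightarrow> 'a"
  assumes "field_aut \<sigma>"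
  shows "0 \<in> Fix \<sigma>" "1 \<in> Fix \<sigma>" "x \<in> Fix \<sigma> \<Longrightarrow> y \<in> Fix \<sigma> \<Longrightarrow> x + y \<in> Fix \<sigma>"
    "x \<in> Fix \<sigma> \<Longrightarrow> y \<in> Fix \<sigma> \<Longrightarrow> x * y \<in> Fix \<sigma>"
  using aut_basic[OF assms] by (auto simp: Fix_def)

lemma fix_card_ge2:
  fixes \<sigma> :: "'a::{field,finite} \<Rightarrow> 'a"
  assumes "field_aut \<sigma>"
  shows "card (Fix \<sigma>) \<ge> 2"
proof -
  have "card {0::'a, 1} \<le> card (Fix \<sigma>)"
    using fix_closed[OF assms] by (intro card_mono) auto
  then show ?thesis by simp
qed

lemma pow_card_mult_closed:
  fixes G :: "'a::field set"
  assumes "finite G" "0 \<notin> G" "\<And>x y. x \<in> G \<Longrightarrow> y \<in> G \<Longrightarrow> x * y \<in> G" "h \<in> G"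
  shows "h ^ card G = 1"
proof -
  have inj: "inj_on ((*) h) G" using assms(2,4) by (auto intro: inj_onI)
  have "(*) h ` G \<subseteq> G" using assms(3,4) by auto
  then have img: "(*) h ` G = G"
    using card_image[OF inj] assms(1) by (metis card_subset_eq)
  have "prod (\<lambda>x. x) G = prod (\<lambda>x. x) ((*) h ` G)" using img by simp
  also have "\<dots> = prod ((*) h) G" using prod.reindex[OF inj] by simp
  also have "\<dots> = h ^ card G * prod (\<lambda>x. x) G" by (simp add: prod.distrib)
  finally have "h ^ card G * prod (\<lambda>x. x) G = 1 * prod (\<lambda>x. x) G" by simp
  moreover have "prod (\<lambda>x. x) G \<noteq> 0" using assms(1,2) by auto
  ultimately show ?thesis by (metis mult_cancel_right)
qed

lemma fix_pow:
  fixes \<sigma> :: "'a::{field,finite} \<Rightarrow> 'a"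
  assumes "field_aut \<sigma>" "x \<in> Fix \<sigma>"
  shows "x ^ card (Fix \<sigma>) = x"
proof (cases "x = 0")
  case True
  then show ?thesis using fix_card_ge2[OF assms(1)] by simp
next
  case False
  have "x ^ card (Fix \<sigma> - {0}) = 1"
    by (rule pow_card_mult_closed) (use assms False fix_closed[OF assms(1)] in auto)
  moreover have "card (Fix \<sigma> - {0}) = card (Fix \<sigma>) - 1"
    using fix_closed(1)[OF assms(1)] by (simp add: card_Diff_singleton)
  ultimately have "x * x ^ (card (Fix \<sigma>) - 1) = x" by simp
  moreover have "Suc (card (Fix \<sigma>) - 1) = card (Fix \<sigma>)"
    using fix_card_ge2[OF assms(1)] by simp
  ultimately show ?thesis by (metis power_Suc)
qed

section \<open>The group of ratios \<sigma>(l)/l\<close>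

text \<open>H = {\<sigma>(l)/l : l \<noteq> 0}; for \<sigma> = \<tau> these are the slopes of the points of L_{1,\<tau>}.\<close>
definition ratios :: "('a::field \<Rightarrow> 'a) \<Rightarrow> 'a set" where
  "ratios \<sigma> = (\<lambda>l. \<sigma> l / l) ` (- {0})"

lemma ratio_fibre:
  fixes \<sigma> :: "'a::field \<Rightarrow> 'a"
  assumes "field_aut \<sigma>" "l0 \<noteq> 0"
  shows "{l. l \<noteq> 0 \<and> \<sigma> l / l = \<sigma> l0 / l0} = (\<lambda>k. k * l0) ` (Fix \<sigma> - {0})"
proof (intro set_eqI iffI)
  fix l assume "l \<in> {l. l \<noteq> 0 \<and> \<sigma> l / l = \<sigma> l0 / l0}"
  then have l: "l \<noteq> 0" "\<sigma> l / l = \<sigma> l0 / l0" by auto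
  have "\<sigma> l0 \<noteq> 0" using aut_eq0[OF assms(1)] assms(2) by simp
  then have "\<sigma> (l / l0) = l / l0"
    using l assms(2) by (simp add: aut_div[OF assms(1)] field_simps)
  then have "l / l0 \<in> Fix \<sigma> - {0}" using l assms(2) by (simp add: Fix_def)
  moreover have "l = (l / l0) * l0" using assms(2) by simp
  ultimately show "l \<in> (\<lambda>k. k * l0) ` (Fix \<sigma> - {0})" by blast
next
  fix l assume "l \<in> (\<lambda>k. k * l0) ` (Fix \<sigma> - {0})"
  then obtain k where "\<sigma> k = k" "k \<noteq> 0" "l = k * l0" by (auto simp: Fix_def)
  then show "l \<in> {l. l \<noteq> 0 \<and> \<sigma> l / l = \<sigma> l0 / l0}"
    using assms(2) by (simp add: aut_mult[OF assms(1)])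
qed

text \<open>Counting the fibres: |H| (q - 1) + 1 = |F|, i.e. |H| = (q^t - 1)/(q - 1).\<close>
lemma card_ratios:
  fixes \<sigma> :: "'a::{field,finite} \<Rightarrow> 'a"
  assumes "field_aut \<sigma>"
  shows "card (ratios \<sigma>) * (card (Fix \<sigma>) - 1) + 1 = card (UNIV :: 'a set)"
proof -
  define fibre where "fibre h = {l. l \<noteq> 0 \<and> \<sigma> l / l = h}" for h
  have cover: "(\<Union>h\<in>ratios \<sigma>. fibre h) = - {0}" unfolding ratios_def fibre_def by auto
  have card_fibre: "card (fibre h) = card (Fix \<sigma>) - 1" if h: "h \<in> ratios \<sigma>" for h
  proof -
    obtain l0 where l0: "l0 \<noteq> 0" "h = \<sigma> l0 / l0" using h unfolding ratios_def by auto
    have "fibre h = (\<lambda>k. k * l0) ` (Fix \<sigma> - {0})"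
      unfolding fibre_def l0(2) by (rule ratio_fibre[OF assms l0(1)])
    moreover have "inj_on (\<lambda>k. k * l0) (Fix \<sigma> - {0})" using l0(1) by (auto intro: inj_onI)
    ultimately show ?thesis using fix_closed(1)[OF assms] by (simp add: card_image card_Diff_singleton)
  qed
  have "card (- {0::'a}) = (\<Sum>h\<in>ratios \<sigma>. card (fibre h))"
    unfolding cover[symmetric] by (rule card_UN_disjoint) (auto simp: fibre_def)
  also have "\<dots> = card (ratios \<sigma>) * (card (Fix \<sigma>) - 1)" using card_fibre by simp
  finally have "card (- {0::'a}) = card (ratios \<sigma>) * (card (Fix \<sigma>) - 1)" .
  moreover have "card (- {0::'a}) + 1 = card (UNIV :: 'a set)"
    by (simp add: Compl_eq_Diff_UNIV card_Diff_singleton card_gt_0_iff)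
  ultimately show ?thesis by simp
qed

lemma card_ratios_eq:
  fixes \<sigma> \<sigma>' :: "'a::{field,finite} \<Rightarrow> 'a"
  assumes "field_aut \<sigma>" "field_aut \<sigma>'" "card (Fix \<sigma>') = card (Fix \<sigma>)"
  shows "card (ratios \<sigma>') = card (ratios \<sigma>)"
proof -
  have "card (ratios \<sigma>') * (card (Fix \<sigma>) - 1) = card (ratios \<sigma>) * (card (Fix \<sigma>) - 1)"
    using card_ratios[OF assms(1)] card_ratios[OF assms(2), unfolded assms(3)] by linarith
  moreover have "card (Fix \<sigma>) - 1 \<noteq> 0" using fix_card_ge2[OF assms(1)] by simp
  ultimately show ?thesis by simp
qed

text \<open>H is a group, so each ratio is an |H|-th root of unity.\<close>
lemma ratios_pow_card:
  fixes \<sigma> :: "'a::{field,finite} \<Rightarrow> 'a"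
  assumes "field_aut \<sigma>" "h \<in> ratios \<sigma>"
  shows "h ^ card (ratios \<sigma>) = 1"
proof (rule pow_card_mult_closed[OF _ _ _ assms(2)])
  have "\<sigma> l / l \<noteq> 0" if "l \<noteq> 0" for l using that aut_eq0[OF assms(1), of l] by simp
  then show "0 \<notin> ratios \<sigma>" unfolding ratios_def by fastforce
  show "x * y \<in> ratios \<sigma>" if xy: "x \<in> ratios \<sigma>" "y \<in> ratios \<sigma>" for x y
  proof -
    obtain a b where "a \<noteq> 0" "b \<noteq> 0" "x = \<sigma> a / a" "y = \<sigma> b / b"
      using xy unfolding ratios_def by blast
    then have "a * b \<in> - {0}" "x * y = \<sigma> (a * b) / (a * b)"
      by (simp_all add: aut_mult[OF assms(1)])
    then show ?thesis unfolding ratios_def by (rule rev_image_eqI)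
  qed
qed simp

lemma geometric_sum_nat:
  fixes q :: nat
  assumes "q \<ge> 1"
  shows "(\<Sum>i<k. q ^ i) * (q - 1) + 1 = q ^ k"
proof (induction k)
  case (Suc k)
  have "(\<Sum>i<Suc k. q ^ i) * (q - 1) + 1 = q ^ k + q ^ k * (q - 1)"
    using Suc by (simp add: algebra_simps)
  also have "\<dots> = q ^ Suc k" using assms by (simp add: algebra_simps)
  finally show ?case .
qed simp

lemma exponent_shape:
  fixes q t n :: nat
  assumes q: "q \<ge> 2" and t: "t \<ge> 3" and n: "n * (q - 1) + 1 = q ^ t"
  shows "\<exists>m\<ge>1. n = 1 + q + q * q * m"
proof (intro exI conjI)
  define m where "m = (\<Sum>i<t - 2. q ^ i)"
  have "q ^ 0 \<le> m" unfolding m_def using t by (intro member_le_sum) auto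
  then show "m \<ge> 1" by simp
  have "m * (q - 1) + 1 = q ^ (t - 2)" unfolding m_def by (rule geometric_sum_nat) (use q in simp)
  moreover have "q ^ t = q * q * q ^ (t - 2)"
  proof -
    have "t = Suc (Suc (t - 2))" using t by simp
    then show ?thesis by (metis mult.assoc power_Suc)
  qed
  moreover obtain r where "q = Suc r" using q by (cases q) auto
  then have "(1 + q + q * q * m) * (q - 1) + 1 = q * q * (m * (q - 1) + 1)"
    by (simp add: algebra_simps)
  ultimately have "n * (q - 1) = (1 + q + q * q * m) * (q - 1)" using n by simp
  moreover have "q - 1 \<noteq> 0" using q by simp
  ultimately show "n = 1 + q + q * q * m" by (metis mult_right_cancel)
qed

section \<open>The q-th power map is additive\<close>

lemma poly_eq_by_values:
  fixes p r :: "'a::{field,finite} poly"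
  assumes "\<And>x. poly p x = poly r x"
    and "degree p < card (UNIV :: 'a set)" "degree r < card (UNIV :: 'a set)"
  shows "p = r"
proof (rule ccontr)
  assume "p \<noteq> r"
  then have "card {x. poly (p - r) x = 0} \<le> degree (p - r)"
    by (intro card_poly_roots_bound) simp
  moreover have "{x. poly (p - r) x = 0} = UNIV" using assms(1) by auto
  moreover have "degree (p - r) \<le> max (degree p) (degree r)" by (rule degree_diff_le_max)
  ultimately show False using assms(2,3) by simp
qed

text \<open>With q = |Fix \<sigma>|: the polynomial (1 + X)^q - 1 - X^q has degree < q and vanishes
  on the q elements of the fixed field (where x^q = x), hence it is zero.\<close>
lemma frobenius_one:
  fixes \<sigma> :: "'a::{field,finite} \<Rightarrow> 'a" and y :: 'a
  assumes "field_aut \<sigma>"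
  shows "(1 + y) ^ card (Fix \<sigma>) = 1 + y ^ card (Fix \<sigma>)"
proof -
  define q where "q = card (Fix \<sigma>)"
  have q2: "q \<ge> 2" unfolding q_def by (rule fix_card_ge2[OF assms])
  define Q where "Q = [:1, 1:] ^ q - 1 - monom (1::'a) q"
  have roots: "Fix \<sigma> \<subseteq> {x. poly Q x = 0}"
  proof
    fix x assume x: "x \<in> Fix \<sigma>"
    then have "1 + x \<in> Fix \<sigma>" using fix_closed[OF assms] by auto
    then have "(1 + x) ^ q = 1 + x" unfolding q_def by (rule fix_pow[OF assms])
    moreover have "x ^ q = x" unfolding q_def by (rule fix_pow[OF assms x])
    ultimately show "x \<in> {x. poly Q x = 0}" by (simp add: Q_def poly_monom add.commute)
  qed
  have "Q = 0"
  proof (rule ccontr)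
    assume nz: "Q \<noteq> 0"
    have "degree Q \<le> q" unfolding Q_def
      by (intro degree_diff_le) (auto simp: degree_linear_power degree_monom_le)
    moreover have "coeff Q q = 0" using q2 by (simp add: Q_def coeff_linear_power)
    ultimately have "degree Q < q" using nz by (metis le_neq_implies_less leading_coeff_0_iff)
    moreover have "card (Fix \<sigma>) \<le> card {x. poly Q x = 0}" using roots by (intro card_mono) auto
    moreover have "card {x. poly Q x = 0} \<le> degree Q" by (rule card_poly_roots_bound[OF nz])
    ultimately show False unfolding q_def by simp
  qed
  then have "poly Q y = 0" by simp
  then show ?thesis unfolding q_def[symmetric] by (simp add: Q_def poly_monom algebra_simps)
qed

lemma frobenius_additive:
  fixes \<sigma> :: "'a::{field,finite} \<Rightarrow> 'a" and a b :: 'a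
  assumes "field_aut \<sigma>"
  shows "(a + b) ^ card (Fix \<sigma>) = a ^ card (Fix \<sigma>) + b ^ card (Fix \<sigma>)"
proof (cases "a = 0")
  case True
  then show ?thesis using fix_card_ge2[OF assms] by simp
next
  case False
  then have "a + b = a * (1 + b / a)" by (simp add: field_simps)
  then have "(a + b) ^ card (Fix \<sigma>) = a ^ card (Fix \<sigma>) * (1 + (b / a) ^ card (Fix \<sigma>))"
    by (simp add: power_mult_distrib frobenius_one[OF assms])
  also have "\<dots> = a ^ card (Fix \<sigma>) + b ^ card (Fix \<sigma>)"
    using False by (simp add: field_simps power_divide)
  finally show ?thesis .
qed

section \<open>Two coefficients of (b + d X)^(1 + q + q^2 m)\<close>

lemma linear_power_additive:
  fixes b d :: "'a::{field,finite}"
  assumes "\<And>x y :: 'a. (x + y) ^ N = x ^ N + y ^ N" "N < card (UNIV :: 'a set)"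
  shows "[:b, d:] ^ N = [:b ^ N:] + monom (d ^ N) N"
proof (rule poly_eq_by_values)
  show "poly ([:b, d:] ^ N) x = poly ([:b ^ N:] + monom (d ^ N) N) x" for x
    using assms(1)[of b "d * x"] by (simp add: poly_monom power_mult_distrib mult.commute)
  have "degree ([:b, d:] ^ N) \<le> degree [:b, d:] * N" by (rule degree_power_le)
  also have "\<dots> \<le> N" by simp
  finally show "degree ([:b, d:] ^ N) < card (UNIV :: 'a set)" using assms(2) by simp
  have "degree ([:b ^ N:] + monom (d ^ N) N) \<le> N"
    using degree_add_le_max[of "[:b ^ N:]" "monom (d ^ N) N"] degree_monom_le[of "d ^ N" N] by simp
  then show "degree ([:b ^ N:] + monom (d ^ N) N) < card (UNIV :: 'a set)" using assms(2) by simp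
qed

lemma binomial_split:
  fixes a b :: "'b::comm_semiring_1"
  shows "\<exists>R. (a + b) ^ m = a ^ m + b * R"
proof (induction m)
  case (Suc m)
  then obtain R where "(a + b) ^ m = a ^ m + b * R" by blast
  then show ?case by (intro exI[of _ "a ^ m + (a + b) * R"]) (simp add: algebra_simps)
qed (intro exI[of _ 0], simp)

text \<open>Writing N = 1 + q + q^2 m, additivity of x \<mapsto> x^q gives
  (b + dX)^N = (b + dX)(b^q + d^q X^q)(b^(q^2) + d^(q^2) X^(q^2))^m, and modulo X^(q^2) this is
  b^(q^2 m) (b + dX)(b^q + d^q X^q).\<close>
lemma coeff_linear_power_q:
  fixes b d :: "'a::{field,finite}"
  assumes q2: "q \<ge> 2" and frob: "\<And>x y :: 'a. (x + y) ^ q = x ^ q + y ^ q"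
    and qq: "q * q < card (UNIV :: 'a set)"
  shows "coeff ([:b, d:] ^ (1 + q + q * q * m)) q = b * d ^ q * (b ^ (q * q)) ^ m"
    and "coeff ([:b, d:] ^ (1 + q + q * q * m)) (Suc q) = d * d ^ q * (b ^ (q * q)) ^ m"
proof -
  have frob2: "(x + y) ^ (q * q) = x ^ (q * q) + y ^ (q * q)" for x y :: 'a
    by (simp add: power_mult frob)
  have "q * 2 \<le> q * q" using q2 by (rule mult_le_mono2)
  then have lt: "q < q * q" "Suc q < q * q" using q2 by linarith+
  then have q_lt: "q < card (UNIV :: 'a set)" using qq by linarith
  define A where "A = [:b, d:] * ([:b ^ q:] + monom (d ^ q) q)"
  define E where "E = (b ^ (q * q)) ^ m"
  obtain R where R: "([:b ^ (q * q):] + monom (d ^ (q * q)) (q * q)) ^ m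
       = [:b ^ (q * q):] ^ m + monom (d ^ (q * q)) (q * q) * R"
    using binomial_split by blast
  have "[:b, d:] ^ (1 + q + q * q * m) = [:b, d:] * [:b, d:] ^ q * ([:b, d:] ^ (q * q)) ^ m"
    by (simp only: power_add power_mult power_one_right)
  also have "\<dots> = A * ([:b ^ (q * q):] + monom (d ^ (q * q)) (q * q)) ^ m"
    unfolding A_def linear_power_additive[OF frob q_lt] linear_power_additive[OF frob2 qq]
    by (simp only: mult.assoc)
  also have "\<dots> = smult E A + monom 1 (q * q) * ([:d ^ (q * q):] * (A * R))"
  proof -
    have "monom (d ^ (q * q)) (q * q) = monom 1 (q * q) * [:d ^ (q * q):]"
      by (simp add: mult.commute smult_monom)
    moreover have "A * [:E:] = smult E A" by (simp add: mult.commute)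
    ultimately show ?thesis unfolding R poly_const_pow E_def[symmetric] distrib_left
      by (simp only: mult.assoc mult.left_commute[of A])
  qed
  finally have split: "[:b, d:] ^ (1 + q + q * q * m) = smult E A + monom 1 (q * q) * ([:d ^ (q * q):] * (A * R))" .
  obtain r where r: "q = Suc (Suc r)" using q2 by (metis add_2_eq_Suc le_Suc_ex)
  have "coeff A q = b * d ^ q" "coeff A (Suc q) = d * d ^ q"
    unfolding A_def using r by (simp_all add: coeff_monom)
  then show "coeff ([:b, d:] ^ (1 + q + q * q * m)) q = b * d ^ q * (b ^ (q * q)) ^ m"
    and "coeff ([:b, d:] ^ (1 + q + q * q * m)) (Suc q) = d * d ^ q * (b ^ (q * q)) ^ m"
    unfolding split coeff_add coeff_smult coeff_monom_mult using lt by (simp_all add: E_def)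
qed

section \<open>Root counting forces a diagonal matrix\<close>

text \<open>A polynomial of degree \<le> n vanishing at n distinct roots of X^n - c is a scalar
  multiple of X^n - c; in particular its coefficients at X^k, 0 < k < n, vanish.\<close>
lemma coeff_vanish_on_nth_roots:
  fixes P :: "'a::field poly"
  assumes deg: "degree P \<le> n" and card: "card S = n"
    and roots: "\<forall>z\<in>S. z ^ n = c" and vanish: "\<forall>z\<in>S. poly P z = 0"
    and k: "0 < k" "k < n"
  shows "coeff P k = 0"
proof -
  define R where "R = P - smult (coeff P n) (monom 1 n - [:c:])"
  have "R = 0"
  proof (rule ccontr)
    assume nz: "R \<noteq> 0"
    have "degree (monom 1 n - [:c:]) \<le> n" by (intro degree_diff_le) (auto simp: degree_monom_le)
    then have "degree R \<le> n" unfolding R_def using deg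
      by (intro degree_diff_le) (auto intro: le_trans[OF degree_smult_le])
    moreover have "coeff [:c:] n = 0" using k by (cases n) auto
    then have "coeff R n = 0" unfolding R_def by simp
    ultimately have "degree R < n" using nz by (metis le_neq_implies_less leading_coeff_0_iff)
    moreover have "S \<subseteq> {x. poly R x = 0}" using roots vanish by (auto simp: R_def poly_monom)
    then have "card S \<le> card {x. poly R x = 0}"
      using poly_roots_finite[OF nz] by (intro card_mono) auto
    moreover have "card {x. poly R x = 0} \<le> degree R" by (rule card_poly_roots_bound[OF nz])
    ultimately show False using card by simp
  qed
  then have "coeff R k = 0" by simp
  moreover have "coeff [:c:] k = 0" using k by (cases k) auto
  ultimately show ?thesis using k unfolding R_def by (simp add: coeff_monom)
qed

lemma binomial_identity_forces_diagonal:
  fixes a b c d e r :: "'a::{field,finite}"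
  assumes q2: "q \<ge> 2" and frob: "\<And>x y :: 'a. (x + y) ^ q = x ^ q + y ^ q"
    and qq: "q * q < card (UNIV :: 'a set)"
    and n: "n = 1 + q + q * q * m" "m \<ge> 1"
    and e: "e \<noteq> 0" and det: "a * d - b * c \<noteq> 0"
    and S: "card S = n" "\<forall>z\<in>S. z ^ n = r" "\<forall>z\<in>S. (b + d * z) ^ n = e * (a + c * z) ^ n"
  shows "(b = 0 \<and> c = 0) \<or> (a = 0 \<and> d = 0)"
proof -
  define P where "P = [:b, d:] ^ n - smult e ([:a, c:] ^ n)"
  have "degree ([:x, y:] ^ n) \<le> n" for x y :: 'a
    using degree_power_le[of "[:x, y:]" n] by (cases "y = 0") auto
  then have "degree P \<le> n" unfolding P_def
    by (intro degree_diff_le) (auto intro: le_trans[OF degree_smult_le])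
  moreover have "\<forall>z\<in>S. poly P z = 0" using S(3) by (simp add: P_def algebra_simps)
  ultimately have "coeff P k = 0" if "0 < k" "k < n" for k
    using coeff_vanish_on_nth_roots S(1,2) that by blast
  then have coeff_eq: "coeff ([:b, d:] ^ n) k = e * coeff ([:a, c:] ^ n) k" if "0 < k" "k < n" for k
    using that unfolding P_def by simp
  have "q * 2 \<le> q * q" "q * q * 1 \<le> q * q * m" using q2 n(2) by (intro mult_le_mono2; simp)+
  then have "0 < q" "Suc q < n" using q2 n(1) by linarith+
  define E where "E = (b ^ (q * q)) ^ m"
  define E' where "E' = (a ^ (q * q)) ^ m"
  have "E = 0 \<Longrightarrow> b = 0" "E' = 0 \<Longrightarrow> a = 0" unfolding E_def E'_def by simp_all
  have X1: "b * d ^ q * E = e * (a * c ^ q * E')"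
    and X2: "d * d ^ q * E = e * (c * c ^ q * E')"
    using coeff_eq[of q] coeff_eq[of "Suc q"] \<open>0 < q\<close> \<open>Suc q < n\<close>
    unfolding n(1) E_def E'_def coeff_linear_power_q[OF q2 frob qq] by simp_all
  have "e * (c ^ q * E' * (b * c - a * d)) = b * (e * (c * c ^ q * E')) - d * (e * (a * c ^ q * E'))"
    by (simp add: algebra_simps)
  also have "\<dots> = 0" unfolding X1[symmetric] X2[symmetric] by (simp add: algebra_simps)
  finally have "c = 0 \<or> a = 0" using e det \<open>E' = 0 \<Longrightarrow> a = 0\<close> by auto
  have "d ^ q * E * (a * d - b * c) = a * (d * d ^ q * E) - c * (b * d ^ q * E)"
    by (simp add: algebra_simps)
  also have "\<dots> = 0" unfolding X1 X2 by (simp add: algebra_simps)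
  finally have "d = 0 \<or> b = 0" using det \<open>E = 0 \<Longrightarrow> b = 0\<close> by auto
  with \<open>c = 0 \<or> a = 0\<close> show ?thesis using det by auto
qed

section \<open>Coordinates on the projective line\<close>

definition det2 :: "'a::field \<times> 'a \<Rightarrow> 'a \<times> 'a \<Rightarrow> 'a" where
  "det2 u v = fst u * snd v - snd u * fst v"

lemma proj_pt_scale:
  fixes u :: "'a::field \<times> 'a"
  assumes "c \<noteq> 0"
  shows "proj_pt (vscale c u) = proj_pt u"
proof -
  have "vscale a (vscale c u) = vscale (a * c) u" "vscale a u = vscale (a / c) (vscale c u)" for a
    using assms by (simp_all add: vscale_def)
  then show ?thesis unfolding proj_pt_def by (metis (no_types, opaque_lifting))
qed

lemma det2_nonzero:
  fixes u v :: "'a::field \<times> 'a"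
  assumes "u \<noteq> (0, 0)" "v \<noteq> (0, 0)" "proj_pt u \<noteq> proj_pt v"
  shows "det2 u v \<noteq> 0"
proof
  assume dep: "det2 u v = 0"
  obtain u1 u2 v1 v2 where uv: "u = (u1, u2)" "v = (v1, v2)" by fastforce
  have "\<exists>c. c \<noteq> 0 \<and> v = vscale c u"
  proof (cases "u1 = 0")
    case True
    then have "u2 \<noteq> 0" "v1 = 0" using assms(1) dep uv by (auto simp: det2_def)
    then have "v2 \<noteq> 0" using assms(2) uv by auto
    with \<open>u2 \<noteq> 0\<close> \<open>v1 = 0\<close> True show ?thesis using uv
      by (intro exI[of _ "v2 / u2"]) (simp add: vscale_def)
  next
    case False
    then have "v2 = v1 * u2 / u1" using dep uv by (simp add: det2_def field_simps)
    moreover have "v1 \<noteq> 0" using assms(2) uv \<open>v2 = v1 * u2 / u1\<close> by auto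
    ultimately show ?thesis using False uv
      by (intro exI[of _ "v1 / u1"]) (simp add: vscale_def)
  qed
  then show False using assms(3) proj_pt_scale by metis
qed

lemma lincomb_eq_zero:
  fixes w v :: "'a::field \<times> 'a"
  assumes "det2 w v \<noteq> 0" "vadd (vscale a w) (vscale b v) = (0, 0)"
  shows "a = 0" "b = 0"
proof -
  have e1: "a * fst w + b * fst v = 0" and e2: "a * snd w + b * snd v = 0"
    using assms(2) by (simp_all add: vadd_def vscale_def prod_eq_iff)
  have "a * det2 w v = (a * fst w + b * fst v) * snd v - (a * snd w + b * snd v) * fst v"
    by (simp add: det2_def algebra_simps)
  then show "a = 0" using assms(1) e1 e2 by simp
  have "b * det2 w v = (a * snd w + b * snd v) * fst w - (a * fst w + b * fst v) * snd w"
    by (simp add: det2_def algebra_simps)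
  then show "b = 0" using assms(1) e1 e2 by simp
qed

lemma coords_in_basis:
  fixes w v u :: "'a::field \<times> 'a"
  assumes "det2 w v \<noteq> 0"
  shows "\<exists>a b. u = vadd (vscale a w) (vscale b v)"
proof -
  obtain u1 u2 w1 w2 v1 v2 where uwv: "u = (u1, u2)" "w = (w1, w2)" "v = (v1, v2)" by fastforce
  define D where "D = w1 * v2 - w2 * v1"
  have D: "D \<noteq> 0" using assms uwv by (simp add: det2_def D_def)
  define a where "a = (u1 * v2 - u2 * v1) / D"
  define b where "b = (w1 * u2 - w2 * u1) / D"
  have "(u1 * v2 - u2 * v1) * w1 + (w1 * u2 - w2 * u1) * v1 = u1 * D"
    "(u1 * v2 - u2 * v1) * w2 + (w1 * u2 - w2 * u1) * v2 = u2 * D"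
    by (simp_all add: D_def algebra_simps)
  then have "u1 = a * w1 + b * v1" "u2 = a * w2 + b * v2"
    using D unfolding a_def b_def by (simp_all add: field_simps)
  then show ?thesis using uwv by (auto simp: vadd_def vscale_def)
qed

lemma det2_lincomb:
  "det2 (vadd (vscale a w) (vscale b v)) (vadd (vscale c w) (vscale d v)) = (a * d - b * c) * det2 w v"
  by (simp add: det2_def vadd_def vscale_def algebra_simps)

lemma pseudoregulus_member:
  fixes w v :: "'a::field \<times> 'a"
  assumes D: "det2 w v \<noteq> 0" and xy: "(x, y) \<noteq> (0, 0)"
    and mem: "proj_pt (vadd (vscale x w) (vscale y v)) \<in> pseudoregulus_set w v \<rho> \<tau>"
  shows "x \<noteq> 0 \<and> y / x \<in> (*) \<rho> ` ratios \<tau>"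
proof -
  obtain l where l: "l \<noteq> 0"
    and eq: "proj_pt (vadd (vscale x w) (vscale y v)) = proj_pt (vadd (vscale l w) (vscale (\<rho> * \<tau> l) v))"
    using mem by (auto simp: pseudoregulus_set_def)
  have "vadd (vscale x w) (vscale y v) \<in> proj_pt (vadd (vscale x w) (vscale y v))"
    unfolding proj_pt_def by (rule CollectI, rule exI[of _ 1]) (simp add: vscale_def)
  then obtain k where "vadd (vscale x w) (vscale y v) = vscale k (vadd (vscale l w) (vscale (\<rho> * \<tau> l) v))"
    unfolding eq by (auto simp: proj_pt_def)
  then have "vadd (vscale (x - k * l) w) (vscale (y - k * (\<rho> * \<tau> l)) v) = (0, 0)"
    by (simp add: vadd_def vscale_def prod_eq_iff algebra_simps)
  from lincomb_eq_zero[OF D this] have x: "x = k * l" and y: "y = k * (\<rho> * \<tau> l)" by simp_all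
  then have "k \<noteq> 0" using xy by auto
  then have "x \<noteq> 0" "y / x = \<rho> * (\<tau> l / l)" using x y l by simp_all
  moreover have "\<tau> l / l \<in> ratios \<tau>" using l by (simp add: ratios_def)
  ultimately show ?thesis by blast
qed

lemma pseudoregulus_ratio_equation:
  fixes w v :: "'a::field \<times> 'a"
  assumes D: "det2 w v \<noteq> 0" and det: "a * d - b * c \<noteq> 0"
    and unit: "\<forall>h\<in>ratios \<tau>. h ^ n = 1"
    and sub: "pseudoregulus_set (vadd (vscale a w) (vscale b v)) (vadd (vscale c w) (vscale d v)) \<rho>' \<tau>'
              \<subseteq> pseudoregulus_set w v \<rho> \<tau>"
    and z: "z \<in> (*) \<rho>' ` ratios \<tau>'"
  shows "(b + d * z) ^ n = \<rho> ^ n * (a + c * z) ^ n"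
proof -
  define w' where "w' = vadd (vscale a w) (vscale b v)"
  define v' where "v' = vadd (vscale c w) (vscale d v)"
  obtain l where l: "l \<noteq> 0" and zl: "z = \<rho>' * (\<tau>' l / l)" using z unfolding ratios_def by blast
  define x where "x = l * (a + c * z)"
  define y where "y = l * (b + d * z)"
  have "proj_pt (vadd (vscale l w') (vscale (\<rho>' * \<tau>' l) v')) \<in> pseudoregulus_set w' v' \<rho>' \<tau>'"
    unfolding pseudoregulus_set_def using l by blast
  moreover have "vadd (vscale l w') (vscale (\<rho>' * \<tau>' l) v') = vadd (vscale x w) (vscale y v)"
  proof -
    have "\<rho>' * \<tau>' l = l * z" using l zl by simp
    then show ?thesis unfolding w'_def v'_def x_def y_def
      by (simp add: vadd_def vscale_def algebra_simps)
  qed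
  ultimately have "proj_pt (vadd (vscale x w) (vscale y v)) \<in> pseudoregulus_set w v \<rho> \<tau>"
    using sub unfolding w'_def v'_def by auto
  moreover have "(x, y) \<noteq> (0, 0)"
  proof
    assume "(x, y) = (0, 0)"
    then have "a + c * z = 0" "b + d * z = 0" using l by (simp_all add: x_def y_def)
    moreover have "a * d - b * c = (a + c * z) * d - (b + d * z) * c" by (simp add: algebra_simps)
    ultimately show False using det by simp
  qed
  ultimately obtain h where x0: "x \<noteq> 0" and h: "h \<in> ratios \<tau>" "y / x = \<rho> * h"
    using pseudoregulus_member[OF D] by blast
  have "(b + d * z) / (a + c * z) = y / x" using l by (simp add: x_def y_def)
  also have "\<dots> = \<rho> * h" by (fact h(2))
  finally have "((b + d * z) / (a + c * z)) ^ n = \<rho> ^ n * h ^ n" by (simp add: power_mult_distrib)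
  then have "((b + d * z) / (a + c * z)) ^ n = \<rho> ^ n" using h(1) unit by simp
  moreover have "a + c * z \<noteq> 0" using x0 by (simp add: x_def)
  ultimately show ?thesis by (simp add: power_divide divide_eq_eq mult.commute)
qed

lemma diagonal_change_fixes_points:
  fixes w v :: "'a::field \<times> 'a"
  assumes "(b = 0 \<and> c = 0) \<or> (a = 0 \<and> d = 0)" and det: "a * d - b * c \<noteq> 0"
  shows "{proj_pt (vadd (vscale a w) (vscale b v)), proj_pt (vadd (vscale c w) (vscale d v))}
         = {proj_pt w, proj_pt v}"
  using assms(1)
proof
  assume "b = 0 \<and> c = 0"
  then have "vadd (vscale a w) (vscale b v) = vscale a w" "vadd (vscale c w) (vscale d v) = vscale d v"
    "a \<noteq> 0" "d \<noteq> 0" using det by (simp_all add: vadd_def vscale_def)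
  then show ?thesis by (simp add: proj_pt_scale)
next
  assume "a = 0 \<and> d = 0"
  then have "vadd (vscale a w) (vscale b v) = vscale b v" "vadd (vscale c w) (vscale d v) = vscale c w"
    "b \<noteq> 0" "c \<noteq> 0" using det by (simp_all add: vadd_def vscale_def)
  then show ?thesis by (simp add: proj_pt_scale insert_commute)
qed

theorem proposition4p3:
  fixes w v w' v' :: "'a::{field,finite} \<times> 'a"
    and \<rho> \<rho>' :: 'a and \<tau> \<tau>' :: "'a \<Rightarrow> 'a" and q t :: nat
  assumes "t \<ge> 3"
    and "card (UNIV :: 'a set) = q ^ t"
    and "field_aut \<tau>" and "card (Fix \<tau>) = q"
    and "field_aut \<tau>'" and "Fix \<tau>' = Fix \<tau>"
    and "\<rho> \<noteq> 0" and "\<rho>' \<noteq> 0"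
    and "w \<noteq> (0, 0)" and "v \<noteq> (0, 0)" and "proj_pt w \<noteq> proj_pt v"
    and "w' \<noteq> (0, 0)" and "v' \<noteq> (0, 0)" and "proj_pt w' \<noteq> proj_pt v'"
    and "pseudoregulus_set w v \<rho> \<tau> = pseudoregulus_set w' v' \<rho>' \<tau>'"
  shows "{proj_pt w', proj_pt v'} = {proj_pt w, proj_pt v}"
proof -
  have q2: "q \<ge> 2" using fix_card_ge2[OF assms(3)] assms(4) by simp
  have frob: "(x + y) ^ q = x ^ q + y ^ q" for x y :: 'a
    using frobenius_additive[OF assms(3)] assms(4) by simp
  have "q ^ 2 < q ^ t" using q2 assms(1) by (intro power_strict_increasing) auto
  then have qq: "q * q < card (UNIV :: 'a set)" using assms(2) by (simp add: power2_eq_square)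
  define n where "n = card (ratios \<tau>)"
  have n: "n * (q - 1) + 1 = q ^ t" using card_ratios[OF assms(3)] assms(2,4) by (simp add: n_def)
  have n': "card (ratios \<tau>') = n" using card_ratios_eq[OF assms(3,5)] assms(6) by (simp add: n_def)
  obtain m where m: "m \<ge> 1" "n = 1 + q + q * q * m" using exponent_shape[OF q2 assms(1) n] by blast
  have D: "det2 w v \<noteq> 0" using det2_nonzero assms(9-11) by blast
  obtain a b c d where w': "w' = vadd (vscale a w) (vscale b v)"
    and v': "v' = vadd (vscale c w) (vscale d v)" using coords_in_basis[OF D] by meson
  have det: "a * d - b * c \<noteq> 0"
    using det2_nonzero[OF assms(12-14)] unfolding w' v' det2_lincomb by simp
  define S where "S = (*) \<rho>' ` ratios \<tau>'"
  have "card S = n" using n' assms(8) by (simp add: S_def card_image inj_on_def)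
  moreover have "\<forall>z\<in>S. z ^ n = \<rho>' ^ n"
    using ratios_pow_card[OF assms(5)] n' by (auto simp: S_def power_mult_distrib)
  moreover have "\<forall>z\<in>S. (b + d * z) ^ n = \<rho> ^ n * (a + c * z) ^ n"
    using pseudoregulus_ratio_equation[OF D det] ratios_pow_card[OF assms(3)] assms(15) w' v'
    unfolding S_def n_def by blast
  ultimately have "(b = 0 \<and> c = 0) \<or> (a = 0 \<and> d = 0)"
    using binomial_identity_forces_diagonal[OF q2 frob qq m(2,1) _ det, where e = "\<rho> ^ n"] assms(7)
    by simp
  then show ?thesis unfolding w' v' using det by (rule diagonal_change_fixes_points)
qed

end
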